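(* Assume C1 and C3. Let $\overline{E_\lambda}=\sup_{(t,\theta)\in[0,T]\times\Theta}\|E_\theta(t)\|_2$. There exist constants $K_1,K_2,L_1>0$, not depending on $\theta,\theta',t$ or $\lambda$, such that for all $\theta,\theta'\in\Theta$ and $t\in[0,T]$, $$\|E_\theta(t)-E_{\theta'}(t)\|_2\le K_1\overline{E_\lambda}\,e^{L_1\overline{E_\lambda}/\lambda}\|\theta-\theta'\|,$$ and $\overline{E_\lambda}\le K_2e^{L_1/\lambda}$.
   Context: Setting: $T>0$, $C\in\mathbb{R}^{d'\times d}$, $\Theta\subset\mathbb{R}^p$, $\lambda>0$; for $\theta\in\Theta$, $A_\theta(t)\in\mathbb{R}^{d\times d}$. $E_\theta$ solves the Riccati equation $\dot E_\theta=C^TC-A_\theta^TE_\theta-E_\theta A_\theta-\frac1\lambda E_\theta^2$ with $E_\theta(0)=Q$ (symmetric, nonnegative). $\|\cdot\|_2$ is the Frobenius norm. C1: $\Theta$ compact. C3: $(t,\theta)\mapsto A_\theta(t)$ continuous on $[0,T]\times\Theta$ (and, as used, $\theta\mapsto A_\theta$ Lipschitz in $L^2$, e.g. under C4: $\partial A_\theta(t)/\partial\theta$ continuous in $(t,\theta)$). *)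

theory Defs
  imports "HOL-Analysis.Analysis"
begin

text \<open>Matrices are rendered as real^'n^'m; the norm on this type is the
Frobenius norm. E lam th t is the Riccati solution for parameter lam.\<close>

definition Ebar :: "(real \<Rightarrow> real^'p \<Rightarrow> real \<Rightarrow> real^'d^'d) \<Rightarrow> real \<Rightarrow> (real^'p) set \<Rightarrow> real \<Rightarrow> real" where
  "Ebar E T \<Theta> lam = (SUP p \<in> {0..T} \<times> \<Theta>. norm (E lam (snd p) (fst p)))"

end

theory Submission
  imports Defs
begin

text \<open>Gronwall's inequality is applied twice. First, the Riccati flow preserves symmetry (the
transpose of a solution solves the same equation with the same initial value) and positive
semidefiniteness: if \<open>x \<bullet> E(t) x + \<epsilon> exp(k t)\<close> first vanishes at \<open>(t0, x0)\<close> with \<open>\<parallel>x0\<parallel> = 1\<close>, then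
\<open>x0\<close> is an eigenvector of \<open>E(t0)\<close> with eigenvalue \<open>-\<epsilon> exp(k t0)\<close>, and for \<open>k = 2a + 2\<close>, where \<open>a\<close>
bounds \<open>\<parallel>A\<parallel>\<close>, the equation makes this function of \<open>t\<close> strictly increasing at \<open>t0\<close>, which is
impossible. For symmetric positive semidefinite \<open>E\<close> we have \<open>\<parallel>E\<parallel> \<le> tr E\<close> and \<open>tr (E\<^sup>2) \<ge> 0\<close>, so
\<open>tr E\<close> satisfies a linear differential inequality not involving \<open>\<lambda>\<close>; this bounds \<open>Ebar\<close> uniformly
in \<open>\<lambda>\<close>. Second, the difference of the solutions for \<open>\<theta>\<close> and \<open>\<theta>'\<close> satisfies a linear equation with
coefficients bounded by \<open>2a + 2 Ebar / \<lambda>\<close> and forcing bounded by \<open>2 Ebar \<parallel>A\<^sub>\<theta> - A\<^sub>\<theta>\<^sub>'\<parallel>\<close>;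
Gronwall's inequality and the Cauchy-Schwarz inequality in \<open>L\<^sup>2(0, T)\<close> give the Lipschitz
estimate with \<open>L1 = 2T\<close>.\<close>

section \<open>Frobenius norm and positive semidefinite matrices\<close>

lemma power2_norm_matrix: "(norm (M::real^'n^'m))\<^sup>2 = (\<Sum>i\<in>UNIV. \<Sum>j\<in>UNIV. (M$i$j)\<^sup>2)"
  unfolding power2_norm_eq_inner by (simp add: inner_vec_def power2_eq_square)

lemma norm_transpose: "norm (transpose (M::real^'n^'m)) = norm M"
proof -
  have "(norm (transpose M))\<^sup>2 = (norm M)\<^sup>2"
    unfolding power2_norm_matrix transpose_def by (subst sum.swap) simp
  then show ?thesis by (simp add: power2_eq_iff_nonneg)
qed

lemma norm_matrix_vector_mult_le: "norm ((M::real^'n^'m) *v x) \<le> norm M * norm x"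
proof -
  have "(norm (M *v x))\<^sup>2 = (\<Sum>i\<in>UNIV. ((M$i) \<bullet> x)\<^sup>2)"
    unfolding power2_norm_eq_inner by (simp add: inner_vec_def matrix_vector_mul_component power2_eq_square)
  also have "\<dots> \<le> (\<Sum>i\<in>UNIV. (norm (M$i))\<^sup>2 * (norm x)\<^sup>2)"
    by (intro sum_mono) (metis Cauchy_Schwarz_ineq2 power2_abs power_mono abs_ge_zero power_mult_distrib)
  also have "\<dots> = (norm M * norm x)\<^sup>2"
    by (simp add: sum_distrib_right power2_norm_eq_inner inner_vec_def[of M M] power_mult_distrib)
  finally show ?thesis
    by (metis norm_ge_zero mult_nonneg_nonneg power2_le_imp_le)
qed

lemma norm_matrix_mult_le: "norm ((M::real^'k^'m) ** (N::real^'n^'k)) \<le> norm M * norm N"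
proof -
  have row: "(M ** N)$i = transpose N *v (M$i)" for i
    by (simp add: vec_eq_iff matrix_matrix_mult_def matrix_vector_mult_def transpose_def mult.commute)
  have "(norm (M ** N))\<^sup>2 = (\<Sum>i\<in>UNIV. (norm ((M ** N)$i))\<^sup>2)"
    by (simp add: power2_norm_eq_inner inner_vec_def)
  also have "\<dots> \<le> (\<Sum>i\<in>UNIV. (norm N)\<^sup>2 * (norm (M$i))\<^sup>2)"
    unfolding row
    by (intro sum_mono) (metis norm_matrix_vector_mult_le norm_transpose norm_ge_zero power_mono power_mult_distrib)
  also have "\<dots> = (norm M * norm N)\<^sup>2"
    by (simp add: sum_distrib_left power2_norm_eq_inner inner_vec_def[of M M] power_mult_distrib mult.commute)
  finally show ?thesis
    by (metis norm_ge_zero mult_nonneg_nonneg power2_le_imp_le)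
qed

lemma inner_transpose_matrix_vector_mult: "(x::real^'n) \<bullet> (transpose (M::real^'n^'m) *v y) = (M *v x) \<bullet> y"
  by (metis dot_lmul_matrix inner_commute transpose_matrix_vector)

lemma trace_transpose_mult: "trace (transpose (M::real^'n^'m) ** N) = M \<bullet> N"
  by (simp add: trace_def matrix_matrix_mult_def transpose_def inner_vec_def) (subst sum.swap, simp)

lemma bounded_linear_transpose: "bounded_linear (transpose :: real^'n^'m \<Rightarrow> real^'m^'n)"
  by (rule bounded_linearI') (simp_all add: transpose_def vec_eq_iff)

lemma bounded_linear_trace: "bounded_linear (trace :: real^'n^'n \<Rightarrow> real)"
  by (rule bounded_linearI') (simp_all add: trace_def sum.distrib sum_distrib_left)

lemma bounded_bilinear_matrix_vector_mult: "bounded_bilinear ((*v) :: real^'n^'m \<Rightarrow> _)"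
proof
  show "\<exists>K. \<forall>M x. norm ((M::real^'n^'m) *v x) \<le> norm M * norm x * K"
    by (rule exI[of _ 1]) (simp add: norm_matrix_vector_mult_le)
qed (simp_all add: matrix_vector_mult_add_rdistrib matrix_vector_right_distrib
       scaleR_matrix_vector_assoc matrix_vector_mult_scaleR)

lemma bounded_linear_quadratic_form: "bounded_linear (\<lambda>M::real^'n^'n. x \<bullet> (M *v x))"
  using bounded_linear_compose[OF bounded_linear_inner_right
      bounded_bilinear.bounded_linear_left[OF bounded_bilinear_matrix_vector_mult]] .

definition positive_semidefinite :: "real^'n^'n \<Rightarrow> bool" where
  "positive_semidefinite M \<longleftrightarrow> (\<forall>x. 0 \<le> x \<bullet> (M *v x))"

lemma positive_semidefinite_unitI:
  fixes M :: "real^'n^'n"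
  assumes "\<And>x. norm x = 1 \<Longrightarrow> 0 \<le> x \<bullet> (M *v x)"
  shows "positive_semidefinite M"
  unfolding positive_semidefinite_def
proof
  fix y :: "real^'n"
  show "0 \<le> y \<bullet> (M *v y)"
  proof (cases "y = 0")
    case False
    have "0 \<le> (inverse (norm y) *\<^sub>R y) \<bullet> (M *v (inverse (norm y) *\<^sub>R y))"
      by (rule assms) (use False in simp)
    also have "\<dots> = (y \<bullet> (M *v y)) / (norm y)\<^sup>2"
      by (simp add: matrix_vector_mult_scaleR power2_eq_square divide_inverse)
    finally show ?thesis by (simp add: zero_le_divide_iff False)
  qed simp
qed

lemma positive_semidefinite_kernel:
  fixes M :: "real^'n^'n"
  assumes sym: "transpose M = M" and psd: "positive_semidefinite M" and zero: "x \<bullet> (M *v x) = 0"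
  shows "M *v x = 0"
proof (rule ccontr)
  define y where "y = M *v x"
  assume "M *v x \<noteq> 0"
  then have y_pos: "0 < y \<bullet> y" by (simp add: y_def)
  define q where "q = y \<bullet> (M *v y)"
  have q: "0 \<le> q" using psd by (simp add: q_def positive_semidefinite_def)
  have "x \<bullet> (M *v y) = y \<bullet> y"
    by (metis inner_transpose_matrix_vector_mult sym y_def)
  then have expand: "(x - t *\<^sub>R y) \<bullet> (M *v (x - t *\<^sub>R y)) = t\<^sup>2 * q - 2 * t * (y \<bullet> y)" for t
    using zero by (simp add: matrix_vector_mult_diff_distrib matrix_vector_mult_scaleR inner_diff_left
        inner_diff_right inner_commute[of y] q_def y_def power2_eq_square algebra_simps)
  define t where "t = (y \<bullet> y) / (q + 1)"
  have "0 < t" "t * q < y \<bullet> y" using y_pos q by (simp_all add: t_def field_simps)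
  then have "t * (t * q) < t * (2 * (y \<bullet> y))"
    using y_pos by (intro mult_strict_left_mono) linarith+
  then have "t\<^sup>2 * q - 2 * t * (y \<bullet> y) < 0"
    by (simp add: power2_eq_square algebra_simps)
  with psd expand show False by (metis not_le positive_semidefinite_def)
qed

lemma positive_semidefinite_entries:
  fixes M :: "real^'n^'n"
  assumes sym: "transpose M = M" and psd: "positive_semidefinite M"
  shows "0 \<le> M$i$i" and "(M$i$j)\<^sup>2 \<le> M$i$i * M$j$j"
proof -
  have axis: "axis k 1 \<bullet> (M *v axis l 1) = M$k$l" for k l
    by (simp add: inner_axis' matrix_vector_mul_component inner_axis)
  have Mji: "M$j$i = M$i$j" using sym by (metis transpose_def vec_lambda_beta)
  have quad: "0 \<le> s\<^sup>2 * M$i$i + 2 * s * r * M$i$j + r\<^sup>2 * M$j$j" for s r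
  proof -
    have "0 \<le> (s *\<^sub>R axis i 1 + r *\<^sub>R axis j 1) \<bullet> (M *v (s *\<^sub>R axis i 1 + r *\<^sub>R axis j 1))"
      using psd by (simp add: positive_semidefinite_def)
    also have "\<dots> = s\<^sup>2 * M$i$i + 2 * s * r * M$i$j + r\<^sup>2 * M$j$j"
      by (simp add: matrix_vector_right_distrib matrix_vector_mult_scaleR axis Mji
          power2_eq_square algebra_simps)
    finally show ?thesis .
  qed
  show diag: "0 \<le> M$i$i" using quad[of 1 0] by simp
  show "(M$i$j)\<^sup>2 \<le> M$i$i * M$j$j"
  proof (cases "M$i$i = 0")
    case True
    then have "0 \<le> 2 * s * M$i$j + M$j$j" for s using quad[of s 1] by simp
    from this[of "- (M$j$j + 1) / (2 * M$i$j)"] True show ?thesis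
      by (cases "M$i$j = 0") (simp_all add: field_simps)
  next
    case False
    then have "0 < M$i$i" using diag by simp
    moreover have "0 \<le> M$i$i * (M$i$i * M$j$j - (M$i$j)\<^sup>2)"
      using quad[of "- M$i$j" "M$i$i"] by (simp add: power2_eq_square algebra_simps)
    ultimately show ?thesis by (simp add: zero_le_mult_iff)
  qed
qed

lemma norm_le_trace_positive_semidefinite:
  fixes M :: "real^'n^'n"
  assumes sym: "transpose M = M" and psd: "positive_semidefinite M"
  shows "norm M \<le> trace M"
proof -
  have "(norm M)\<^sup>2 = (\<Sum>i\<in>UNIV. \<Sum>j\<in>UNIV. (M$i$j)\<^sup>2)" by (rule power2_norm_matrix)
  also have "\<dots> \<le> (\<Sum>i\<in>UNIV. \<Sum>j\<in>UNIV. M$i$i * M$j$j)"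
    by (intro sum_mono positive_semidefinite_entries[OF sym psd])
  also have "\<dots> = (trace M)\<^sup>2"
    by (simp add: trace_def power2_eq_square sum_product)
  finally have "(norm M)\<^sup>2 \<le> (trace M)\<^sup>2" .
  moreover have "0 \<le> trace M"
    unfolding trace_def by (intro sum_nonneg positive_semidefinite_entries[OF sym psd])
  ultimately show ?thesis using power2_le_imp_le by blast
qed

section \<open>Integral and differential inequalities\<close>

lemma norm_increment_le_integral:
  fixes F :: "real \<Rightarrow> 'a::banach"
  assumes deriv: "\<And>s. s \<in> {0..T} \<Longrightarrow> (F has_vector_derivative F' s) (at s within {0..T})"
    and g: "continuous_on {0..T} g" and bound: "\<And>s. s \<in> {0..T} \<Longrightarrow> norm (F' s) \<le> g s"
    and t: "t \<in> {0..T}"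
  shows "norm (F t - F 0) \<le> integral {0..t} g"
proof -
  have sub: "{0..t} \<subseteq> {0..T}" using t by auto
  have FTC: "(F' has_integral (F t - F 0)) {0..t}"
    using t sub by (intro fundamental_theorem_of_calculus)
      (auto intro!: has_vector_derivative_within_subset[OF deriv])
  have "g integrable_on {0..t}"
    using continuous_on_subset[OF g sub] integrable_continuous_interval by blast
  then show ?thesis
    using integral_norm_bound_integral[OF has_integral_integrable[OF FTC]] bound sub
      integral_unique[OF FTC] by auto
qed

lemma gronwall_integral:
  fixes u :: "real \<Rightarrow> real"
  assumes u: "continuous_on {0..T} u" and k: "0 \<le> k"
    and ineq: "\<And>s. s \<in> {0..T} \<Longrightarrow> u s \<le> c + k * integral {0..s} u"
    and t: "t \<in> {0..T}"
  shows "u t \<le> c * exp (k * t)"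
proof -
  define w where "w s = c + k * integral {0..s} u" for s
  define \<phi> where "\<phi> s = exp (- k * s) * w s" for s
  have dw: "(w has_real_derivative k * u s) (at s within {0..T})" if "s \<in> {0..T}" for s
    unfolding w_def has_real_derivative_iff_has_vector_derivative
    using integral_has_vector_derivative[OF u that] by (auto intro!: derivative_eq_intros)
  have d\<phi>: "(\<phi> has_vector_derivative exp (- k * s) * k * (u s - w s)) (at s within {0..T})"
    if "s \<in> {0..T}" for s
    unfolding \<phi>_def has_real_derivative_iff_has_vector_derivative[symmetric]
    using dw[OF that] by (auto intro!: derivative_eq_intros simp: algebra_simps)
  have "((\<lambda>s. exp (- k * s) * k * (u s - w s)) has_integral (\<phi> t - \<phi> 0)) {0..t}"
    by (intro fundamental_theorem_of_calculus has_vector_derivative_within_subset[OF d\<phi>])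
      (use t in auto)
  moreover have "((\<lambda>s. 0) has_integral 0) {0..t}" by simp
  moreover have "exp (- k * s) * k * (u s - w s) \<le> 0" if "s \<in> {0..t}" for s
    using ineq[of s] that t k by (simp add: w_def mult_nonneg_nonpos)
  ultimately have "\<phi> t - \<phi> 0 \<le> 0" by (rule has_integral_le)
  then have "w t \<le> c * exp (k * t)"
    by (simp add: \<phi>_def w_def exp_minus field_simps)
  then show ?thesis using ineq[OF t] by (simp add: w_def)
qed

lemma norm_gronwall:
  fixes F :: "real \<Rightarrow> 'a::banach"
  assumes deriv: "\<And>s. s \<in> {0..T} \<Longrightarrow> (F has_vector_derivative F' s) (at s within {0..T})"
    and g: "continuous_on {0..T} g" "\<And>s. s \<in> {0..T} \<Longrightarrow> 0 \<le> g s"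
    and bound: "\<And>s. s \<in> {0..T} \<Longrightarrow> norm (F' s) \<le> k * norm (F s) + g s"
    and k: "0 \<le> k" and t: "t \<in> {0..T}"
  shows "norm (F t) \<le> (norm (F 0) + integral {0..T} g) * exp (k * t)"
proof (rule gronwall_integral[OF _ k _ t])
  have "continuous_on {0..T} F" using deriv by (rule continuous_on_vector_derivative)
  then show u: "continuous_on {0..T} (\<lambda>s. norm (F s))" by (intro continuous_intros)
  fix s assume s: "s \<in> {0..T}"
  then have sub: "{0..s} \<subseteq> {0..T}" by auto
  have int_u: "(\<lambda>s. norm (F s)) integrable_on {0..s}" and int_g: "g integrable_on {0..s}"
    using continuous_on_subset[OF u sub] continuous_on_subset[OF g(1) sub]
    by (auto intro: integrable_continuous_interval)
  have "norm (F s - F 0) \<le> integral {0..s} (\<lambda>r. k * norm (F r) + g r)"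
    using s by (intro norm_increment_le_integral[OF deriv _ bound]
        continuous_on_add continuous_on_mult_left u g(1))
  also have "\<dots> = k * integral {0..s} (\<lambda>r. norm (F r)) + integral {0..s} g"
    using int_u int_g by (subst integral_add) (auto intro: integrable_on_mult_right)
  finally have "norm (F s - F 0) \<le> k * integral {0..s} (\<lambda>r. norm (F r)) + integral {0..s} g" .
  moreover have "integral {0..s} g \<le> integral {0..T} g"
    using g(2) sub by (intro integral_subset_le[OF sub int_g] integrable_continuous_interval g(1)) auto
  moreover have "norm (F s) \<le> norm (F 0) + norm (F s - F 0)"
    using norm_triangle_ineq[of "F 0" "F s - F 0"] by simp
  ultimately show "norm (F s) \<le> norm (F 0) + integral {0..T} g + k * integral {0..s} (\<lambda>s. norm (F s))"
    by linarith
qed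

lemma compact_obtains_earliest_nonpositive:
  fixes g :: "real \<times> 'a::metric_space \<Rightarrow> real"
  assumes K: "compact K" and g: "continuous_on K g" and p: "p \<in> K" "g p \<le> 0"
  obtains p0 where "p0 \<in> K" "g p0 \<le> 0" "\<And>q. q \<in> K \<Longrightarrow> g q \<le> 0 \<Longrightarrow> fst p0 \<le> fst q"
proof -
  define P where "P = K \<inter> g -` {..0}"
  have "closed P"
    unfolding P_def by (rule continuous_closed_preimage[OF g compact_imp_closed[OF K] closed_atMost])
  then have "compact (K \<inter> P)" by (rule compact_Int_closed[OF K])
  then have "compact P" by (simp add: P_def Int_assoc[symmetric])
  moreover have "P \<noteq> {}" using p by (auto simp: P_def)
  ultimately obtain p0 where "p0 \<in> P" "\<And>q. q \<in> P \<Longrightarrow> fst p0 \<le> fst q"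
    using continuous_attains_inf[OF _ _ continuous_on_fst[OF continuous_on_id]] by metis
  then show ?thesis by (intro that[of p0]) (auto simp: P_def)
qed

lemma has_real_derivative_nonpos_at_first_nonpositive:
  fixes f :: "real \<Rightarrow> real"
  assumes deriv: "(f has_real_derivative f') (at t0 within {0..T})" and t0: "0 < t0" "t0 \<le> T"
    and before: "\<And>s. 0 \<le> s \<Longrightarrow> s < t0 \<Longrightarrow> 0 < f s" and at: "f t0 \<le> 0"
  shows "f' \<le> 0"
proof (rule ccontr)
  assume "\<not> f' \<le> 0"
  then obtain d where d: "0 < d" "\<And>h. 0 < h \<Longrightarrow> t0 - h \<in> {0..T} \<Longrightarrow> h < d \<Longrightarrow> f (t0 - h) < f t0"
    using has_real_derivative_pos_inc_left[OF deriv] by force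
  define h where "h = min (d / 2) t0"
  have "0 < h" "h < d" "t0 - h \<in> {0..T}" using d t0 by (auto simp: h_def)
  then have "f (t0 - h) < 0" using d(2) at by fastforce
  moreover have "0 < f (t0 - h)" using \<open>0 < h\<close> by (intro before) (auto simp: h_def)
  ultimately show False by simp
qed

lemma integral_le_sqrt_mult_L2_bound:
  fixes f :: "real \<Rightarrow> real"
  assumes T: "0 < T" and f: "continuous_on {0..T} f" and M: "0 \<le> M"
    and L2: "integral {0..T} (\<lambda>s. (f s)\<^sup>2) \<le> M\<^sup>2"
  shows "integral {0..T} f \<le> sqrt T * M"
proof -
  have young: "integral {0..T} f \<le> M\<^sup>2 / (2 * r) + r * T / 2" if r: "0 < r" for r
  proof -
    have "f s \<le> (f s)\<^sup>2 / (2 * r) + r / 2" for s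
    proof -
      have "0 \<le> (f s - r)\<^sup>2" by simp
      then show ?thesis using r by (simp add: field_simps power2_eq_square)
    qed
    then have "integral {0..T} f \<le> integral {0..T} (\<lambda>s. (f s)\<^sup>2 / (2 * r) + r / 2)"
      using r by (intro integral_le integrable_continuous_interval continuous_intros f) auto
    also have "\<dots> = integral {0..T} (\<lambda>s. (f s)\<^sup>2) / (2 * r) + r * T / 2"
      using T r by (subst integral_add) (auto intro!: integrable_continuous_interval continuous_intros f)
    also have "\<dots> \<le> M\<^sup>2 / (2 * r) + r * T / 2"
      using L2 r by (simp add: divide_right_mono)
    finally show ?thesis .
  qed
  show ?thesis
  proof (cases "M = 0")
    case True
    show ?thesis
    proof (rule field_le_epsilon)
      fix e :: real assume "0 < e"
      then show "integral {0..T} f \<le> sqrt T * M + e"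
        using young[of "2 * e / T"] T True by simp
    qed
  next
    case False
    then have "M\<^sup>2 / (2 * (M / sqrt T)) + M / sqrt T * T / 2 = sqrt T * M"
      using T by (simp add: field_simps power2_eq_square)
    then show ?thesis using young[of "M / sqrt T"] False M T by simp
  qed
qed

section \<open>The Riccati vector field\<close>

definition riccati_rhs :: "real^'n^'k \<Rightarrow> real^'n^'n \<Rightarrow> real \<Rightarrow> real^'n^'n \<Rightarrow> real^'n^'n" where
  "riccati_rhs C A lam E = transpose C ** C - transpose A ** E - E ** A - (1 / lam) *\<^sub>R (E ** E)"

lemma transpose_riccati_rhs: "transpose (riccati_rhs C A lam E) = riccati_rhs C A lam (transpose E)"
proof -
  have transpose_diff: "transpose (M - N) = transpose M - transpose N" for M N :: "real^'n^'n"
    by (simp add: transpose_def vec_eq_iff)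
  show ?thesis
    unfolding riccati_rhs_def transpose_diff transpose_scalar matrix_transpose_mul
    by (simp add: algebra_simps)
qed

lemma riccati_rhs_diff:
  "riccati_rhs C A1 lam E1 - riccati_rhs C A2 lam E2
    = - (transpose A1 ** (E1 - E2)) - transpose (A1 - A2) ** E2 - (E1 - E2) ** A1 - E2 ** (A1 - A2)
      - (1 / lam) *\<^sub>R (E1 ** (E1 - E2) + (E1 - E2) ** E2)"
  by (simp add: riccati_rhs_def vec_eq_iff matrix_matrix_mult_def transpose_def sum_subtractf
      sum.distrib sum_distrib_left algebra_simps)

lemma norm_riccati_rhs_diff_le:
  assumes "0 < lam"
  shows "norm (riccati_rhs C A1 lam E1 - riccati_rhs C A2 lam E2)
    \<le> (2 * norm A1 + (norm E1 + norm E2) / lam) * norm (E1 - E2) + 2 * norm E2 * norm (A1 - A2)"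
proof -
  have "norm (riccati_rhs C A1 lam E1 - riccati_rhs C A2 lam E2)
      \<le> norm (transpose A1 ** (E1 - E2)) + norm (transpose (A1 - A2) ** E2) + norm ((E1 - E2) ** A1)
        + norm (E2 ** (A1 - A2)) + (1 / lam) * (norm (E1 ** (E1 - E2)) + norm ((E1 - E2) ** E2))"
    unfolding riccati_rhs_diff using assms
    by (smt (verit) norm_minus_cancel norm_scaleR norm_triangle_ineq norm_triangle_ineq4
        divide_pos_pos mult_left_mono zero_less_one)
  also have "\<dots> \<le> norm A1 * norm (E1 - E2) + norm (A1 - A2) * norm E2 + norm (E1 - E2) * norm A1
        + norm E2 * norm (A1 - A2) + (1 / lam) * (norm E1 * norm (E1 - E2) + norm (E1 - E2) * norm E2)"
    using assms
    by (intro add_mono mult_left_mono norm_matrix_mult_le[THEN order_trans]) (auto simp: norm_transpose)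
  also have "\<dots> = (2 * norm A1 + (norm E1 + norm E2) / lam) * norm (E1 - E2) + 2 * norm E2 * norm (A1 - A2)"
    by (simp add: field_simps)
  finally show ?thesis .
qed

lemma quadratic_form_riccati_rhs_eigenvector:
  fixes E :: "real^'n^'n"
  assumes sym: "transpose E = E" and eigen: "E *v x = c *\<^sub>R x"
  shows "x \<bullet> (riccati_rhs C A lam E *v x)
    = (C *v x) \<bullet> (C *v x) - 2 * c * (x \<bullet> (A *v x)) - c\<^sup>2 / lam * (x \<bullet> x)"
proof -
  have Ex: "x \<bullet> (E *v y) = c * (x \<bullet> y)" for y
    by (metis sym eigen inner_transpose_matrix_vector_mult inner_scaleR_left)
  show ?thesis
    unfolding riccati_rhs_def
    by (simp add: matrix_vector_mult_diff_rdistrib inner_diff_right matrix_vector_mul_assoc[symmetric]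
        inner_transpose_matrix_vector_mult Ex eigen scaleR_matrix_vector_assoc[symmetric]
        inner_commute[of "A *v x"]
        power2_eq_square algebra_simps del: transpose_matrix_vector)
qed

lemma quadratic_form_riccati_rhs_lower_bound:
  fixes E A :: "real^'n^'n"
  assumes sym: "transpose E = E" and psd: "positive_semidefinite (E + \<mu> *\<^sub>R mat 1)"
    and touch: "x \<bullet> (E *v x) = - \<mu>" and x: "norm x = 1" and A: "norm A \<le> a" and \<mu>: "0 \<le> \<mu>"
  shows "- 2 * \<mu> * a - \<mu>\<^sup>2 / lam \<le> x \<bullet> (riccati_rhs C A lam E *v x)"
proof -
  have shift: "(E + \<mu> *\<^sub>R mat 1) *v y = E *v y + \<mu> *\<^sub>R y" for y
    by (simp add: matrix_vector_mult_add_rdistrib scaleR_matrix_vector_assoc[symmetric])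
  have xx: "x \<bullet> x = 1" using x by (simp add: dot_square_norm)
  have "E$j$i = E$i$j" for i j using sym by (metis transpose_def vec_lambda_beta)
  then have "transpose (E + \<mu> *\<^sub>R mat 1) = E + \<mu> *\<^sub>R mat 1"
    by (simp add: transpose_def vec_eq_iff mat_def)
  moreover have "x \<bullet> ((E + \<mu> *\<^sub>R mat 1) *v x) = 0" by (simp add: shift touch xx inner_add_right)
  ultimately have "(E + \<mu> *\<^sub>R mat 1) *v x = 0" by (rule positive_semidefinite_kernel[OF _ psd])
  then have eigen: "E *v x = (- \<mu>) *\<^sub>R x" by (simp add: shift eq_neg_iff_add_eq_0)
  have "\<bar>x \<bullet> (A *v x)\<bar> \<le> a"
    using Cauchy_Schwarz_ineq2[of x "A *v x"] norm_matrix_vector_mult_le[of A x] x A by simp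
  then have "- 2 * \<mu> * a \<le> 2 * \<mu> * (x \<bullet> (A *v x))"
    using mult_left_mono[of "- (x \<bullet> (A *v x))" a "2 * \<mu>"] \<mu> by (simp add: abs_le_iff)
  moreover have "x \<bullet> (riccati_rhs C A lam E *v x)
      = (C *v x) \<bullet> (C *v x) + 2 * \<mu> * (x \<bullet> (A *v x)) - \<mu>\<^sup>2 / lam"
    unfolding quadratic_form_riccati_rhs_eigenvector[OF sym eigen] xx by simp
  ultimately show ?thesis using inner_ge_zero[of "C *v x"] by linarith
qed

lemma trace_riccati_rhs_le:
  fixes E A :: "real^'n^'n"
  assumes sym: "transpose E = E" and psd: "positive_semidefinite E" and A: "norm A \<le> a"
    and lam: "0 < lam"
  shows "trace (riccati_rhs C A lam E) \<le> (norm C)\<^sup>2 + 2 * a * trace E"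
proof -
  have "trace (riccati_rhs C A lam E) = C \<bullet> C - A \<bullet> E - transpose A \<bullet> E - (1 / lam) * (E \<bullet> E)"
  proof -
    have "trace (c *\<^sub>R M) = c * trace M" for c and M :: "real^'n^'n"
      by (simp add: trace_def sum_distrib_left)
    moreover have "trace (E ** E) = E \<bullet> E" "trace (E ** A) = transpose A \<bullet> E"
      using trace_transpose_mult[of E] trace_transpose_mult[of "transpose A" E] trace_mul_sym[of E A]
      by (simp_all add: sym)
    ultimately show ?thesis
      by (simp add: riccati_rhs_def trace_sub trace_transpose_mult)
  qed
  moreover have "- (M \<bullet> E) \<le> a * trace E" if "norm M \<le> a" for M
    using Cauchy_Schwarz_ineq2[of M E] norm_le_trace_positive_semidefinite[OF sym psd] that
    by (smt (verit) mult_mono norm_ge_zero)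
  then have "- (A \<bullet> E) \<le> a * trace E" "- (transpose A \<bullet> E) \<le> a * trace E"
    using A by (simp_all add: norm_transpose)
  moreover have "0 \<le> (1 / lam) * (E \<bullet> E)" using lam by simp
  ultimately show ?thesis by (simp add: dot_square_norm)
qed

section \<open>Solutions of the Riccati equation\<close>

lemma riccati_solutions_diff_bound:
  fixes E1 E2 A1 A2 :: "real \<Rightarrow> real^'n^'n" and C :: "real^'n^'k"
  assumes lam: "0 < lam" and A1: "continuous_on {0..T} A1" and A2: "continuous_on {0..T} A2"
    and A1_bound: "\<And>s. s \<in> {0..T} \<Longrightarrow> norm (A1 s) \<le> a"
    and E_bound: "\<And>s. s \<in> {0..T} \<Longrightarrow> norm (E1 s) \<le> b" "\<And>s. s \<in> {0..T} \<Longrightarrow> norm (E2 s) \<le> b"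
    and E1: "\<And>s. s \<in> {0..T} \<Longrightarrow>
      (E1 has_vector_derivative riccati_rhs C (A1 s) lam (E1 s)) (at s within {0..T})"
    and E2: "\<And>s. s \<in> {0..T} \<Longrightarrow>
      (E2 has_vector_derivative riccati_rhs C (A2 s) lam (E2 s)) (at s within {0..T})"
    and t: "t \<in> {0..T}"
  shows "norm (E1 t - E2 t)
    \<le> (norm (E1 0 - E2 0) + 2 * b * integral {0..T} (\<lambda>s. norm (A1 s - A2 s)))
       * exp ((2 * a + 2 * b / lam) * t)"
proof -
  have a: "0 \<le> a" and b: "0 \<le> b"
    using A1_bound[OF t] E_bound(1)[OF t] norm_ge_zero order_trans by blast+
  have "norm (E1 t - E2 t)
      \<le> (norm (E1 0 - E2 0) + integral {0..T} (\<lambda>s. 2 * b * norm (A1 s - A2 s)))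
         * exp ((2 * a + 2 * b / lam) * t)"
  proof (intro norm_gronwall[OF has_vector_derivative_diff[OF E1 E2]] continuous_intros t)
    fix s assume s: "s \<in> {0..T}"
    have "norm (riccati_rhs C (A1 s) lam (E1 s) - riccati_rhs C (A2 s) lam (E2 s))
        \<le> (2 * norm (A1 s) + (norm (E1 s) + norm (E2 s)) / lam) * norm (E1 s - E2 s)
          + 2 * norm (E2 s) * norm (A1 s - A2 s)"
      by (rule norm_riccati_rhs_diff_le[OF lam])
    also have "\<dots> \<le> (2 * a + 2 * b / lam) * norm (E1 s - E2 s) + 2 * b * norm (A1 s - A2 s)"
      using A1_bound[OF s] E_bound[OF s] lam
      by (intro add_mono mult_right_mono mult_left_mono divide_right_mono) auto
    finally show "norm (riccati_rhs C (A1 s) lam (E1 s) - riccati_rhs C (A2 s) lam (E2 s))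
      \<le> (2 * a + 2 * b / lam) * norm (E1 s - E2 s) + 2 * b * norm (A1 s - A2 s)" .
  qed (use a b lam A1 A2 in auto)
  then show ?thesis by simp
qed

locale riccati_solution =
  fixes lam T a :: real and A E :: "real \<Rightarrow> real^'n^'n" and C :: "real^'n^'k" and Q :: "real^'n^'n"
  assumes lam_pos: "0 < lam"
    and A_cont: "continuous_on {0..T} A"
    and A_bound: "\<And>t. t \<in> {0..T} \<Longrightarrow> norm (A t) \<le> a"
    and Q_sym: "transpose Q = Q" and Q_psd: "positive_semidefinite Q"
    and initial: "E 0 = Q"
    and solves: "\<And>t. t \<in> {0..T} \<Longrightarrow>
      (E has_vector_derivative riccati_rhs C (A t) lam (E t)) (at t within {0..T})"
begin

lemma continuous: "continuous_on {0..T} E"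
  using solves by (rule continuous_on_vector_derivative)

lemma bound_nonneg: "t \<in> {0..T} \<Longrightarrow> 0 \<le> a"
  using A_bound order_trans[OF norm_ge_zero] by blast

lemma quadratic_form_has_derivative:
  "t \<in> {0..T} \<Longrightarrow> ((\<lambda>s. x \<bullet> (E s *v x)) has_real_derivative x \<bullet> (riccati_rhs C (A t) lam (E t) *v x))
    (at t within {0..T})"
  unfolding has_real_derivative_iff_has_vector_derivative
  by (rule bounded_linear.has_vector_derivative[OF bounded_linear_quadratic_form solves])

lemma symmetric:
  assumes t: "t \<in> {0..T}"
  shows "transpose (E t) = E t"
proof -
  have "bounded (E ` {0..T})"
    by (intro compact_imp_bounded compact_continuous_image continuous compact_Icc)
  then obtain b where b: "\<And>s. s \<in> {0..T} \<Longrightarrow> norm (E s) \<le> b"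
    unfolding bounded_iff by blast
  have b': "norm (transpose (E s)) \<le> b" if "s \<in> {0..T}" for s
    using b[OF that] by (simp add: norm_transpose)
  have "((\<lambda>s. transpose (E s)) has_vector_derivative riccati_rhs C (A s) lam (transpose (E s)))
      (at s within {0..T})" if "s \<in> {0..T}" for s
    using bounded_linear.has_vector_derivative[OF bounded_linear_transpose solves[OF that]]
    by (simp add: transpose_riccati_rhs)
  from riccati_solutions_diff_bound[OF lam_pos A_cont A_cont A_bound b b' solves this t]
  show ?thesis by (simp add: initial Q_sym norm_transpose)
qed

lemma earliest_touching_time:
  assumes t: "t \<in> {0..T}" and x: "norm x = 1" and \<epsilon>: "0 < \<epsilon>"
    and nonpos: "x \<bullet> (E t *v x) + \<epsilon> * exp (k * t) \<le> 0"
  obtains t0 x0 where "0 < t0" "t0 \<le> T" "norm x0 = 1" "x0 \<bullet> (E t0 *v x0) + \<epsilon> * exp (k * t0) \<le> 0"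
    "\<And>s y. 0 \<le> s \<Longrightarrow> s < t0 \<Longrightarrow> norm y = 1 \<Longrightarrow> 0 < y \<bullet> (E s *v y) + \<epsilon> * exp (k * s)"
    "\<And>y. norm y = 1 \<Longrightarrow> 0 \<le> y \<bullet> (E t0 *v y) + \<epsilon> * exp (k * t0)"
proof -
  define g where "g p = snd p \<bullet> (E (fst p) *v snd p) + \<epsilon> * exp (k * fst p)" for p :: "real \<times> (real^'n)"
  define K where "K = {0..T} \<times> sphere (0::real^'n) 1"
  have "compact K" unfolding K_def by (intro compact_Times compact_Icc compact_sphere)
  moreover have "continuous_on K (\<lambda>p. E (fst p))"
    by (rule continuous_on_compose2[OF continuous continuous_on_fst]) (auto simp: K_def)
  then have "continuous_on K g"
    unfolding g_def
    by (intro continuous_intros bounded_bilinear.continuous_on[OF bounded_bilinear_matrix_vector_mult])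
  ultimately obtain p0 where p0: "p0 \<in> K" "g p0 \<le> 0"
    and earliest: "\<And>q. q \<in> K \<Longrightarrow> g q \<le> 0 \<Longrightarrow> fst p0 \<le> fst q"
    by (rule compact_obtains_earliest_nonpositive[of K g "(t, x)"])
      (use t x nonpos in \<open>auto simp: K_def g_def\<close>)
  obtain t0 x0 where p0_eq: "p0 = (t0, x0)" by fastforce
  have before: "0 < g (s, y)" if "0 \<le> s" "s < t0" "norm y = 1" for s y
    using earliest[of "(s, y)"] p0 that by (force simp: K_def p0_eq)
  have "0 < t0"
  proof (rule ccontr)
    assume "\<not> 0 < t0"
    then have "g p0 = x0 \<bullet> (Q *v x0) + \<epsilon>" using p0 by (simp add: K_def g_def initial p0_eq)
    moreover have "0 \<le> x0 \<bullet> (Q *v x0)" using Q_psd by (simp add: positive_semidefinite_def)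
    ultimately show False using p0(2) \<epsilon> by simp
  qed
  have "0 \<le> g (t0, y)" if y: "norm y = 1" for y
  proof -
    have "continuous_on {0..t0} E"
      using p0 by (intro continuous_on_subset[OF continuous]) (auto simp: K_def p0_eq)
    then have cont: "continuous_on (closure {0..<t0}) (\<lambda>s. g (s, y))"
      using \<open>0 < t0\<close> unfolding g_def
      by (auto intro!: continuous_intros bounded_bilinear.continuous_on[OF bounded_bilinear_matrix_vector_mult])
    have "0 \<le> g (s, y)" if "s \<in> {0..<t0}" for s
      using before[of s y] that y by simp
    from continuous_ge_on_closure[OF cont _ this] show ?thesis
      using \<open>0 < t0\<close> by simp
  qed
  then show ?thesis
    using p0 before \<open>0 < t0\<close> unfolding K_def g_def p0_eq by (intro that[of t0 x0]) auto
qed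

lemma perturbed_quadratic_form_pos:
  assumes \<epsilon>: "0 < \<epsilon>" "\<epsilon> * exp ((2 * a + 2) * T) < lam" and t: "t \<in> {0..T}" and x: "norm x = 1"
  shows "0 < x \<bullet> (E t *v x) + \<epsilon> * exp ((2 * a + 2) * t)"
proof (rule ccontr)
  define k where "k = 2 * a + 2"
  assume "\<not> ?thesis"
  then have "x \<bullet> (E t *v x) + \<epsilon> * exp (k * t) \<le> 0" by (simp add: k_def)
  then obtain t0 x0 where t0: "0 < t0" "t0 \<le> T" and x0: "norm x0 = 1"
    and at_t0: "x0 \<bullet> (E t0 *v x0) + \<epsilon> * exp (k * t0) \<le> 0"
    and before: "\<And>s y. 0 \<le> s \<Longrightarrow> s < t0 \<Longrightarrow> norm y = 1 \<Longrightarrow> 0 < y \<bullet> (E s *v y) + \<epsilon> * exp (k * s)"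
    and touch: "\<And>y. norm y = 1 \<Longrightarrow> 0 \<le> y \<bullet> (E t0 *v y) + \<epsilon> * exp (k * t0)"
    using earliest_touching_time[OF t x \<epsilon>(1)] by blast
  define \<mu> where "\<mu> = \<epsilon> * exp (k * t0)"
  have a: "0 \<le> a" using t0 by (intro bound_nonneg[of t0]) simp
  have "0 < \<mu>" using \<epsilon> by (simp add: \<mu>_def)
  have "exp (k * t0) \<le> exp (k * T)" using t0 a by (simp add: k_def mult_left_mono)
  then have "\<mu> \<le> \<epsilon> * exp (k * T)" using \<epsilon> by (simp add: \<mu>_def)
  then have "\<mu> < lam" using \<epsilon> by (simp add: k_def)
  have touch_eq: "x0 \<bullet> (E t0 *v x0) = - \<mu>" using at_t0 touch[OF x0] by (simp add: \<mu>_def)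
  have "positive_semidefinite (E t0 + \<mu> *\<^sub>R mat 1)"
  proof (rule positive_semidefinite_unitI)
    fix y :: "real^'n" assume "norm y = 1"
    then show "0 \<le> y \<bullet> ((E t0 + \<mu> *\<^sub>R mat 1) *v y)"
      using touch[of y] by (simp add: \<mu>_def matrix_vector_mult_add_rdistrib
          scaleR_matrix_vector_assoc[symmetric] inner_add_right dot_square_norm)
  qed
  then have lower: "- 2 * \<mu> * a - \<mu>\<^sup>2 / lam \<le> x0 \<bullet> (riccati_rhs C (A t0) lam (E t0) *v x0)"
    using t0 \<open>0 < \<mu>\<close> by (intro quadratic_form_riccati_rhs_lower_bound symmetric touch_eq x0 A_bound) auto
  have "((\<lambda>s. x0 \<bullet> (E s *v x0) + \<epsilon> * exp (k * s)) has_real_derivative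
      x0 \<bullet> (riccati_rhs C (A t0) lam (E t0) *v x0) + k * \<mu>) (at t0 within {0..T})"
    using t0 unfolding \<mu>_def
    by (intro DERIV_add quadratic_form_has_derivative) (auto intro!: derivative_eq_intros)
  then have "x0 \<bullet> (riccati_rhs C (A t0) lam (E t0) *v x0) + k * \<mu> \<le> 0"
    using t0 before[OF _ _ x0] at_t0 by (rule has_real_derivative_nonpos_at_first_nonpositive)
  moreover have "\<mu>\<^sup>2 / lam < \<mu>"
    using \<open>0 < \<mu>\<close> \<open>\<mu> < lam\<close> lam_pos by (simp add: power2_eq_square field_simps)
  ultimately show False using lower \<open>0 < \<mu>\<close> by (simp add: k_def algebra_simps)
qed

lemma positive_semidefinite_solution:
  assumes t: "t \<in> {0..T}"
  shows "positive_semidefinite (E t)"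
proof (rule positive_semidefinite_unitI)
  fix x :: "real^'n" assume x: "norm x = 1"
  define X where "X = exp ((2 * a + 2) * T)"
  have X: "0 < X" "exp ((2 * a + 2) * t) \<le> X"
    using t bound_nonneg[OF t] by (auto simp: X_def intro!: mult_left_mono)
  show "0 \<le> x \<bullet> (E t *v x)"
  proof (rule ccontr)
    assume "\<not> ?thesis"
    then have neg: "x \<bullet> (E t *v x) < 0" by simp
    define \<epsilon> where "\<epsilon> = min (lam / (2 * X)) (- (x \<bullet> (E t *v x)) / (2 * X))"
    have \<epsilon>: "0 < \<epsilon>" "\<epsilon> * X < lam" "\<epsilon> * X \<le> - (x \<bullet> (E t *v x)) / 2"
      using X(1) neg lam_pos by (auto simp: \<epsilon>_def min_def field_simps)
    have "0 < x \<bullet> (E t *v x) + \<epsilon> * exp ((2 * a + 2) * t)"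
      using \<epsilon> t x by (intro perturbed_quadratic_form_pos) (simp_all add: X_def)
    moreover have "\<epsilon> * exp ((2 * a + 2) * t) \<le> \<epsilon> * X"
      using X(2) \<epsilon>(1) by simp
    ultimately show False using \<epsilon>(3) neg by linarith
  qed
qed

lemma norm_le_uniform_bound:
  assumes t: "t \<in> {0..T}"
  shows "norm (E t) \<le> (trace Q + (norm C)\<^sup>2 * T) * exp (2 * a * T)"
proof -
  define \<tau> where "\<tau> s = trace (E s)" for s
  have a: "0 \<le> a" by (rule bound_nonneg[OF t])
  have \<tau>_cont: "continuous_on {0..T} \<tau>"
    unfolding \<tau>_def by (rule linear_continuous_on_compose[OF continuous bounded_linear.linear[OF bounded_linear_trace]])
  have \<tau>_deriv: "(\<tau> has_vector_derivative trace (riccati_rhs C (A s) lam (E s))) (at s within {0..T})"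
    if "s \<in> {0..T}" for s
    unfolding \<tau>_def by (rule bounded_linear.has_vector_derivative[OF bounded_linear_trace solves[OF that]])
  have trQ: "0 \<le> trace Q"
    using norm_le_trace_positive_semidefinite[OF Q_sym Q_psd] norm_ge_zero order_trans by blast
  have "\<tau> s \<le> (trace Q + (norm C)\<^sup>2 * T) + 2 * a * integral {0..s} \<tau>" if s: "s \<in> {0..T}" for s
  proof -
    have sub: "{0..s} \<subseteq> {0..T}" using s by auto
    have "((\<lambda>r. trace (riccati_rhs C (A r) lam (E r))) has_integral (\<tau> s - \<tau> 0)) {0..s}"
      by (intro fundamental_theorem_of_calculus has_vector_derivative_within_subset[OF \<tau>_deriv])
        (use s in auto)
    moreover have "((\<lambda>r. (norm C)\<^sup>2) has_integral (s * (norm C)\<^sup>2)) {0..s}"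
      using has_integral_const_real[of "(norm C)\<^sup>2" 0 s] s by simp
    then have "((\<lambda>r. (norm C)\<^sup>2 + 2 * a * \<tau> r) has_integral (s * (norm C)\<^sup>2 + 2 * a * integral {0..s} \<tau>)) {0..s}"
      by (intro has_integral_add has_integral_mult_right integrable_integral integrable_continuous_interval
          continuous_on_subset[OF \<tau>_cont sub])
    moreover have "trace (riccati_rhs C (A r) lam (E r)) \<le> (norm C)\<^sup>2 + 2 * a * \<tau> r" if "r \<in> {0..s}" for r
      using that sub unfolding \<tau>_def
      by (intro trace_riccati_rhs_le symmetric positive_semidefinite_solution A_bound lam_pos) auto
    ultimately have "\<tau> s - \<tau> 0 \<le> s * (norm C)\<^sup>2 + 2 * a * integral {0..s} \<tau>"
      by (rule has_integral_le)
    moreover have "s * (norm C)\<^sup>2 \<le> (norm C)\<^sup>2 * T" using s by (simp add: mult.commute mult_right_mono)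
    ultimately show ?thesis by (simp add: \<tau>_def initial)
  qed
  then have "\<tau> t \<le> (trace Q + (norm C)\<^sup>2 * T) * exp (2 * a * t)"
    using a t by (intro gronwall_integral[OF \<tau>_cont]) simp_all
  also have "\<dots> \<le> (trace Q + (norm C)\<^sup>2 * T) * exp (2 * a * T)"
    using trQ t a by (intro mult_left_mono) (auto intro!: mult_left_mono)
  finally show ?thesis
    using norm_le_trace_positive_semidefinite[OF symmetric[OF t] positive_semidefinite_solution[OF t]]
    by (simp add: \<tau>_def)
qed

end

section \<open>Dependence on the parameter\<close>

lemma riccati_solutions_diff_le_L2:
  assumes S1: "riccati_solution lam T a A1 E1 C Q" and S2: "riccati_solution lam T a' A2 E2 C Q"
    and T: "0 < T"
    and b: "\<And>s. s \<in> {0..T} \<Longrightarrow> norm (E1 s) \<le> b" "\<And>s. s \<in> {0..T} \<Longrightarrow> norm (E2 s) \<le> b"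
    and L2: "integral {0..T} (\<lambda>s. (norm (A1 s - A2 s))\<^sup>2) \<le> M\<^sup>2" and M: "0 \<le> M"
    and t: "t \<in> {0..T}"
  shows "norm (E1 t - E2 t) \<le> 2 * sqrt T * exp (2 * a * T) * b * exp (2 * T * b / lam) * M"
proof -
  interpret S1: riccati_solution lam T a A1 E1 C Q by (rule S1)
  interpret S2: riccati_solution lam T a' A2 E2 C Q by (rule S2)
  have a: "0 \<le> a" and b0: "0 \<le> b" and lam: "0 < lam"
    using S1.bound_nonneg[OF t] b(1)[OF t] norm_ge_zero order_trans S1.lam_pos by blast+
  have int: "integral {0..T} (\<lambda>s. norm (A1 s - A2 s)) \<le> sqrt T * M"
    by (intro integral_le_sqrt_mult_L2_bound[OF T _ M L2] continuous_intros S1.A_cont S2.A_cont)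
  have exp: "exp ((2 * a + 2 * b / lam) * t) \<le> exp ((2 * a + 2 * b / lam) * T)"
    using t a b0 lam by (auto intro!: mult_left_mono)
  have "norm (E1 t - E2 t)
      \<le> (norm (E1 0 - E2 0) + 2 * b * integral {0..T} (\<lambda>s. norm (A1 s - A2 s)))
         * exp ((2 * a + 2 * b / lam) * t)"
    by (rule riccati_solutions_diff_bound[OF lam S1.A_cont S2.A_cont S1.A_bound b S1.solves S2.solves t])
  also have "\<dots> \<le> (2 * b * (sqrt T * M)) * exp ((2 * a + 2 * b / lam) * T)"
    using mult_left_mono[OF int, of "2 * b"] exp b0 M T
    by (intro mult_mono) (simp_all add: S1.initial S2.initial)
  also have "\<dots> = 2 * sqrt T * exp (2 * a * T) * b * exp (2 * T * b / lam) * M"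
    by (simp add: exp_add[symmetric] algebra_simps)
  finally show ?thesis .
qed

lemma norm_le_Ebar:
  assumes bound: "\<And>th t. th \<in> \<Theta> \<Longrightarrow> t \<in> {0..T} \<Longrightarrow> norm (E lam th t) \<le> B"
    and th: "th \<in> \<Theta>" and t: "t \<in> {0..T}"
  shows "norm (E lam th t) \<le> Ebar E T \<Theta> lam"
  unfolding Ebar_def using th t bound
  by (intro cSUP_upper2[where x="(t, th)"] bdd_aboveI2[where M=B]) auto

lemma Ebar_le:
  assumes "0 \<le> T" "\<Theta> \<noteq> {}" "\<And>th t. th \<in> \<Theta> \<Longrightarrow> t \<in> {0..T} \<Longrightarrow> norm (E lam th t) \<le> B"
  shows "Ebar E T \<Theta> lam \<le> B"
  unfolding Ebar_def using assms by (intro cSUP_least) auto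

lemma riccati_family_Lipschitz:
  assumes sol: "\<And>th. th \<in> \<Theta> \<Longrightarrow> riccati_solution lam T a (A th) (E lam th) C Q" and T: "0 < T"
    and bound: "\<And>th t. th \<in> \<Theta> \<Longrightarrow> t \<in> {0..T} \<Longrightarrow> norm (E lam th t) \<le> B"
    and L2: "\<And>th th'. th \<in> \<Theta> \<Longrightarrow> th' \<in> \<Theta> \<Longrightarrow>
      integral {0..T} (\<lambda>t. (norm (A th t - A th' t))\<^sup>2) \<le> (L * norm (th - th'))\<^sup>2"
    and L: "0 \<le> L" and th: "th \<in> \<Theta>" "th' \<in> \<Theta>" and t: "t \<in> {0..T}"
  shows "norm (E lam th t - E lam th' t)
    \<le> 2 * sqrt T * exp (2 * a * T) * L * Ebar E T \<Theta> lam * exp (2 * T * Ebar E T \<Theta> lam / lam)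
       * norm (th - th')"
proof -
  have "norm (E lam th t - E lam th' t)
    \<le> 2 * sqrt T * exp (2 * a * T) * Ebar E T \<Theta> lam * exp (2 * T * Ebar E T \<Theta> lam / lam)
       * (L * norm (th - th'))"
    using th t L
    by (intro riccati_solutions_diff_le_L2[OF sol sol T] norm_le_Ebar[where E=E, OF bound] L2) auto
  then show ?thesis by (simp add: algebra_simps)
qed

lemma obtain_pos_Lipschitz_constant_sq:
  fixes d :: "'a::real_normed_vector \<Rightarrow> 'a \<Rightarrow> real"
  assumes "\<exists>L. \<forall>x\<in>S. \<forall>y\<in>S. d x y \<le> (L * norm (x - y))\<^sup>2"
  obtains L where "0 < L" "\<And>x y. x \<in> S \<Longrightarrow> y \<in> S \<Longrightarrow> d x y \<le> (L * norm (x - y))\<^sup>2"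
proof -
  obtain L0 where L0: "\<forall>x\<in>S. \<forall>y\<in>S. d x y \<le> (L0 * norm (x - y))\<^sup>2" using assms by blast
  have sq: "(L0 * r)\<^sup>2 \<le> ((\<bar>L0\<bar> + 1) * r)\<^sup>2" if "0 \<le> r" for r :: real
    using that by (simp add: abs_le_square_iff[symmetric] abs_mult mult_right_mono)
  show ?thesis
  proof (rule that[of "\<bar>L0\<bar> + 1"])
    fix x y assume "x \<in> S" "y \<in> S"
    then show "d x y \<le> ((\<bar>L0\<bar> + 1) * norm (x - y))\<^sup>2"
      using L0 by (intro order_trans[OF _ sq[OF norm_ge_zero]]) blast
  qed simp
qed

lemma riccati_family_solutions:
  fixes A :: "'p::metric_space \<Rightarrow> real \<Rightarrow> real^'n^'n" and C :: "real^'n^'k"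
  assumes C1: "compact \<Theta>" and C3: "continuous_on ({0..T} \<times> \<Theta>) (\<lambda>(t, th). A th t)"
    and Q_sym: "transpose Q = Q" and Q_nonneg: "\<forall>x. 0 \<le> x \<bullet> (Q *v x)"
    and riccati: "\<forall>lam>0. \<forall>th\<in>\<Theta>. E lam th 0 = Q \<and> (\<forall>t\<in>{0..T}.
      (E lam th has_vector_derivative riccati_rhs C (A th t) lam (E lam th t)) (at t within {0..T}))"
  obtains a where "\<And>lam th. 0 < lam \<Longrightarrow> th \<in> \<Theta> \<Longrightarrow> riccati_solution lam T a (A th) (E lam th) C Q"
proof -
  obtain a where a: "\<And>th t. th \<in> \<Theta> \<Longrightarrow> t \<in> {0..T} \<Longrightarrow> norm (A th t) \<le> a"
    using compact_imp_bounded[OF compact_continuous_image[OF C3 compact_Times[OF compact_Icc C1]]]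
    unfolding bounded_iff by fastforce
  have "riccati_solution lam T a (A th) (E lam th) C Q" if "0 < lam" "th \<in> \<Theta>" for lam th
  proof
    have "continuous_on {0..T} (\<lambda>t. (\<lambda>(t, th). A th t) (t, th))"
      by (rule continuous_on_compose2[OF C3 continuous_on_Pair[OF continuous_on_id continuous_on_const]])
        (use that in auto)
    then show "continuous_on {0..T} (A th)" by simp
  qed (use that a Q_sym Q_nonneg riccati in \<open>auto simp: positive_semidefinite_def\<close>)
  then show ?thesis by (rule that)
qed

theorem mainTheorem11:
  fixes T :: real and C :: "real^'d^'m" and Q :: "real^'d^'d"
    and \<Theta> :: "(real^'p) set"
    and A :: "real^'p \<Rightarrow> real \<Rightarrow> real^'d^'d"
    and E :: "real \<Rightarrow> real^'p \<Rightarrow> real \<Rightarrow> real^'d^'d"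
  assumes T_pos: "T > 0"
    and C1: "compact \<Theta>" and Theta_ne: "\<Theta> \<noteq> {}"
    and C3: "continuous_on ({0..T} \<times> \<Theta>) (\<lambda>(t, th). A th t)"
    and A_Lip: "\<exists>L. \<forall>th\<in>\<Theta>. \<forall>th'\<in>\<Theta>.
        integral {0..T} (\<lambda>t. (norm (A th t - A th' t))\<^sup>2) \<le> (L * norm (th - th'))\<^sup>2"
    and Q_sym: "transpose Q = Q"
    and Q_nonneg: "\<forall>x. 0 \<le> x \<bullet> (Q *v x)"
    and riccati: "\<forall>lam>0. \<forall>th\<in>\<Theta>. E lam th 0 = Q \<and>
        (\<forall>t\<in>{0..T}. (E lam th has_vector_derivative
           (transpose C ** C - transpose (A th t) ** E lam th t - E lam th t ** A th t
            - (1 / lam) *\<^sub>R (E lam th t ** E lam th t))) (at t within {0..T}))"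
  shows "\<exists>K1 K2 L1. K1 > 0 \<and> K2 > 0 \<and> L1 > 0 \<and>
    (\<forall>lam>0.
      (\<forall>th\<in>\<Theta>. \<forall>th'\<in>\<Theta>. \<forall>t\<in>{0..T}.
         norm (E lam th t - E lam th' t)
           \<le> K1 * Ebar E T \<Theta> lam * exp (L1 * Ebar E T \<Theta> lam / lam) * norm (th - th'))
      \<and> Ebar E T \<Theta> lam \<le> K2 * exp (L1 / lam))"
proof -
  obtain L where "0 < L" and L: "\<And>th th'. th \<in> \<Theta> \<Longrightarrow> th' \<in> \<Theta> \<Longrightarrow>
      integral {0..T} (\<lambda>t. (norm (A th t - A th' t))\<^sup>2) \<le> (L * norm (th - th'))\<^sup>2"
    using obtain_pos_Lipschitz_constant_sq[OF A_Lip] by blast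
  obtain a where sol: "\<And>lam th. 0 < lam \<Longrightarrow> th \<in> \<Theta> \<Longrightarrow> riccati_solution lam T a (A th) (E lam th) C Q"
    using riccati_family_solutions[OF C1 C3 Q_sym Q_nonneg riccati[folded riccati_rhs_def]] by blast
  define B where "B = (trace Q + (norm C)\<^sup>2 * T) * exp (2 * a * T)"
  have E_le_B: "norm (E lam th t) \<le> B" if "0 < lam" "th \<in> \<Theta>" "t \<in> {0..T}" for lam th t
    using riccati_solution.norm_le_uniform_bound[OF sol] that by (simp add: B_def)
  obtain th0 where "th0 \<in> \<Theta>" using Theta_ne by blast
  then have "0 \<le> B" using E_le_B[of 1 th0 0] T_pos by (simp add: order_trans[OF norm_ge_zero])
  have Ebar_bound: "Ebar E T \<Theta> lam \<le> (B + 1) * exp (2 * T / lam)" if "0 < lam" for lam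
    using Ebar_le[where E=E, OF _ Theta_ne E_le_B[OF that]] T_pos \<open>0 \<le> B\<close> that
    by (smt (verit) one_le_exp_iff mult_le_cancel_left1 zero_le_divide_iff)
  have lip: "norm (E lam th t - E lam th' t) \<le> 2 * sqrt T * exp (2 * a * T) * L
      * Ebar E T \<Theta> lam * exp (2 * T * Ebar E T \<Theta> lam / lam) * norm (th - th')"
    if "0 < lam" "th \<in> \<Theta>" "th' \<in> \<Theta>" "t \<in> {0..T}" for lam th th' t
    using that \<open>0 < L\<close> by (intro riccati_family_Lipschitz[OF sol T_pos E_le_B L]) auto
  show ?thesis
  proof (rule exI[of _ "2 * sqrt T * exp (2 * a * T) * L"], rule exI[of _ "B + 1"],
      rule exI[of _ "2 * T"], intro conjI allI impI ballI lip Ebar_bound)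
  qed (use \<open>0 \<le> B\<close> \<open>0 < L\<close> T_pos in simp_all)
qed

end
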